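(* Let $\mathfrak g$ be a Lie algebra over a field $\mathbb k$ and $X$ its associated TSD object (obtained by composing the binary SD operation). The homomorphism $\Theta^2\colon H^2_{\rm Lie}(\mathfrak g;\mathfrak g)\to H^2_{\rm TSD}(X;X)$ induced by $\Theta^2(\phi)((a,x)\otimes(b,y)\otimes(c,z))=(0,\ b\phi(x,z)+c\phi(x,y)+[\phi(x,y),z]+\phi([x,y],z))$ is injective.
   Context: $X=\mathbb k\oplus\mathfrak g$, $\Delta(a,x)=(a,x)\otimes(1,0)+(1,0)\otimes(0,x)$, $\Delta_3=(\Delta\otimes\mathbb 1)\Delta$, $q((a,x)\otimes(b,y))=(ab,bx+[x,y])$, $T=q\circ(q\otimes\mathbb 1)$, so $T((a,x)\otimes(b,y)\otimes(c,z))=(abc,bcx+c[x,y]+b[x,z]+[[x,y],z])$. TSD cohomology: with $\sigma$ sending $u_1\otimes\cdots\otimes u_9$ to $u_1\otimes u_4\otimes u_7\otimes u_2\otimes u_5\otimes u_8\otimes u_3\otimes u_6\otimes u_9$: $C^1_{\rm TSD}$ = linear $f$ with $\Delta_3 f=(f\otimes\mathbb 1\otimes\mathbb 1+\mathbb 1\otimes f\otimes\mathbb 1+\mathbb 1\otimes\mathbb 1\otimes f)\Delta_3$; $C^2_{\rm TSD}$ = linear $\psi\colon X^{\otimes 3}\to X$ with $\Delta_3\psi=(\psi\otimes T\otimes T+T\otimes\psi\otimes T+T\otimes T\otimes\psi)\sigma\Delta_3^{\otimes3}$; $\delta^1 f(x\otimes y\otimes z)=f(T(x\otimes y\otimes z))-T(f(x)\otimes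 y\otimes z)-T(x\otimes f(y)\otimes z)-T(x\otimes y\otimes f(z))$; $\delta^2\psi(x\otimes y\otimes z\otimes w\otimes u)=T(\psi(x\otimes y\otimes z)\otimes w\otimes u)+\psi(T(x\otimes y\otimes z)\otimes w\otimes u)-\psi(A_1\otimes A_2\otimes A_3)-T(\Psi_1\otimes A_2\otimes A_3)-T(A_1\otimes\Psi_2\otimes A_3)-T(A_1\otimes A_2\otimes\Psi_3)$, $A_i=T(x_i\otimes w^{(i)}\otimes u^{(i)})$ with $(x_1,x_2,x_3)=(x,y,z)$, $\Psi_i$ likewise with $\psi$; $H^2_{\rm TSD}=(C^2\cap\ker\delta^2)/\delta^1(C^1)$. Lie cohomology: alternating bilinear $2$-cochains $\phi$, $\delta^2\phi(x,y,z)=[\phi(x,y),z]+[\phi(y,z),x]+[\phi(z,x),y]+\phi([x,y],z)+\phi([y,z],x)+\phi([z,x],y)$, $\delta^1f(x,y)=f([x,y])-[f(x),y]-[x,f(y)]$, $H^2_{\rm Lie}=\ker\delta^2/\operatorname{im}\delta^1$. *)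

theory Defs
  imports Complex_Main "HOL-Library.Product_Plus"
begin

definition lie_algebra :: "('k::field \<Rightarrow> 'g::ab_group_add \<Rightarrow> 'g) \<Rightarrow> ('g \<Rightarrow> 'g \<Rightarrow> 'g) \<Rightarrow> bool" where
  "lie_algebra s br \<longleftrightarrow> vector_space s
     \<and> (\<forall>x y z. br (x + y) z = br x z + br y z)
     \<and> (\<forall>x y z. br x (y + z) = br x y + br x z)
     \<and> (\<forall>c x y. br (s c x) y = s c (br x y))
     \<and> (\<forall>c x y. br x (s c y) = s c (br x y))
     \<and> (\<forall>x. br x x = 0)
     \<and> (\<forall>x y z. br (br x y) z + br (br y z) x + br (br z x) y = 0)"

definition lie_cochain2 :: "('k::field \<Rightarrow> 'g::ab_group_add \<Rightarrow> 'g) \<Rightarrow> ('g \<Rightarrow> 'g \<Rightarrow> 'g) \<Rightarrow> bool" where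
  "lie_cochain2 s \<phi> \<longleftrightarrow>
     (\<forall>x. Vector_Spaces.linear s s (\<lambda>y. \<phi> x y))
     \<and> (\<forall>y. Vector_Spaces.linear s s (\<lambda>x. \<phi> x y))
     \<and> (\<forall>x. \<phi> x x = 0)"

definition lie_d2 :: "('g::ab_group_add \<Rightarrow> 'g \<Rightarrow> 'g) \<Rightarrow> ('g \<Rightarrow> 'g \<Rightarrow> 'g) \<Rightarrow> 'g \<Rightarrow> 'g \<Rightarrow> 'g \<Rightarrow> 'g" where
  "lie_d2 br \<phi> x y z =
     br (\<phi> x y) z + br (\<phi> y z) x + br (\<phi> z x) y
     + \<phi> (br x y) z + \<phi> (br y z) x + \<phi> (br z x) y"

definition lie_d1 :: "('g::ab_group_add \<Rightarrow> 'g \<Rightarrow> 'g) \<Rightarrow> ('g \<Rightarrow> 'g) \<Rightarrow> 'g \<Rightarrow> 'g \<Rightarrow> 'g" where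
  "lie_d1 br f x y = f (br x y) - br (f x) y - br x (f y)"

definition Xs :: "('k::field \<Rightarrow> 'g \<Rightarrow> 'g) \<Rightarrow> 'k \<Rightarrow> 'k \<times> 'g \<Rightarrow> 'k \<times> 'g" where
  "Xs s c u = (c * fst u, s c (snd u))"

definition Xunit :: "'k::field \<times> 'g::ab_group_add" where
  "Xunit = (1, 0)"

definition Xhat :: "'g \<Rightarrow> 'k::field \<times> 'g::ab_group_add" where
  "Xhat x = (0, x)"

definition q_op :: "('k::field \<Rightarrow> 'g::ab_group_add \<Rightarrow> 'g) \<Rightarrow> ('g \<Rightarrow> 'g \<Rightarrow> 'g)
    \<Rightarrow> 'k \<times> 'g \<Rightarrow> 'k \<times> 'g \<Rightarrow> 'k \<times> 'g" where
  "q_op s br u v = (fst u * fst v, s (fst v) (snd u) + br (snd u) (snd v))"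

definition T_op :: "('k::field \<Rightarrow> 'g::ab_group_add \<Rightarrow> 'g) \<Rightarrow> ('g \<Rightarrow> 'g \<Rightarrow> 'g)
    \<Rightarrow> 'k \<times> 'g \<Rightarrow> 'k \<times> 'g \<Rightarrow> 'k \<times> 'g \<Rightarrow> 'k \<times> 'g" where
  "T_op s br u v w = q_op s br (q_op s br u v) w"

(* An element of X^\<otimes>^2 (resp. X^\<otimes>^3) is represented by a list of pure tensors
  (formal sum). Linear maps out of X^\<otimes>^n are represented by n-linear maps.
  Two elements of X^\<otimes>^3 are equal iff every trilinear form X \<times> X \<times> X \<rightarrow> k
  takes the same value on them (linear functionals on a tensor product of vector
  spaces separate points). *)

definition Delta :: "'k::field \<times> 'g::ab_group_add \<Rightarrow> (('k \<times> 'g) \<times> ('k \<times> 'g)) list" where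
  "Delta u = [(u, Xunit), (Xunit, Xhat (snd u))]"

(* \<Delta>_3 = (\<Delta> \<otimes> 1) \<Delta>. *)
definition Delta3 :: "'k::field \<times> 'g::ab_group_add \<Rightarrow> (('k \<times> 'g) \<times> ('k \<times> 'g) \<times> ('k \<times> 'g)) list" where
  "Delta3 u = concat (map (\<lambda>(p, r). map (\<lambda>(p1, p2). (p1, p2, r)) (Delta p)) (Delta u))"

definition ev3 :: "('a \<Rightarrow> 'a \<Rightarrow> 'a \<Rightarrow> 'k::comm_monoid_add) \<Rightarrow> ('a \<times> 'a \<times> 'a) list \<Rightarrow> 'k" where
  "ev3 \<beta> L = sum_list (map (\<lambda>(a, b, c). \<beta> a b c) L)"

definition trilinear :: "('k::field \<Rightarrow> 'a::ab_group_add \<Rightarrow> 'a) \<Rightarrow> ('k \<Rightarrow> 'b::ab_group_add \<Rightarrow> 'b)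
    \<Rightarrow> ('a \<Rightarrow> 'a \<Rightarrow> 'a \<Rightarrow> 'b) \<Rightarrow> bool" where
  "trilinear s1 s2 F \<longleftrightarrow>
     (\<forall>v w. Vector_Spaces.linear s1 s2 (\<lambda>u. F u v w))
     \<and> (\<forall>u w. Vector_Spaces.linear s1 s2 (\<lambda>v. F u v w))
     \<and> (\<forall>u v. Vector_Spaces.linear s1 s2 (\<lambda>w. F u v w))"

(* C^1: linear f with \<Delta>_3 f = (f\<otimes>1\<otimes>1 + 1\<otimes>f\<otimes>1 + 1\<otimes>1\<otimes>f) \<Delta>_3. *)
definition C1_TSD :: "('k::field \<Rightarrow> 'g::ab_group_add \<Rightarrow> 'g) \<Rightarrow> ('k \<times> 'g \<Rightarrow> 'k \<times> 'g) \<Rightarrow> bool" where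
  "C1_TSD s f \<longleftrightarrow> Vector_Spaces.linear (Xs s) (Xs s) f
     \<and> (\<forall>u \<beta>. trilinear (Xs s) (*) \<beta> \<longrightarrow>
          ev3 \<beta> (Delta3 (f u)) =
          ev3 \<beta> (concat (map (\<lambda>(a, b, c). [(f a, b, c), (a, f b, c), (a, b, f c)]) (Delta3 u))))"

(* C^2: linear \<psi> : X^\<otimes>^3 \<rightarrow> X (a trilinear map) with
  \<Delta>_3 \<psi> = (\<psi>\<otimes>T\<otimes>T + T\<otimes>\<psi>\<otimes>T + T\<otimes>T\<otimes>\<psi>) \<sigma> \<Delta>_3^\<otimes>^3.
  On u \<otimes> v \<otimes> w, \<sigma> \<Delta>_3^\<otimes>^3 sends the pure terms (u1\<otimes>u2\<otimes>u3)\<otimes>(v1\<otimes>v2\<otimes>v3)\<otimes>(w1\<otimes>w2\<otimes>w3)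
  to (u1\<otimes>v1\<otimes>w1)\<otimes>(u2\<otimes>v2\<otimes>w2)\<otimes>(u3\<otimes>v3\<otimes>w3). *)
definition C2_TSD :: "('k::field \<Rightarrow> 'g::ab_group_add \<Rightarrow> 'g) \<Rightarrow> ('g \<Rightarrow> 'g \<Rightarrow> 'g)
    \<Rightarrow> ('k \<times> 'g \<Rightarrow> 'k \<times> 'g \<Rightarrow> 'k \<times> 'g \<Rightarrow> 'k \<times> 'g) \<Rightarrow> bool" where
  "C2_TSD s br \<psi> \<longleftrightarrow> trilinear (Xs s) (Xs s) \<psi>
     \<and> (\<forall>u v w \<beta>. trilinear (Xs s) (*) \<beta> \<longrightarrow>
          ev3 \<beta> (Delta3 (\<psi> u v w)) =
          ev3 \<beta> (concat (map (\<lambda>((u1, u2, u3), (v1, v2, v3), (w1, w2, w3)).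
                  [(\<psi> u1 v1 w1, T_op s br u2 v2 w2, T_op s br u3 v3 w3),
                   (T_op s br u1 v1 w1, \<psi> u2 v2 w2, T_op s br u3 v3 w3),
                   (T_op s br u1 v1 w1, T_op s br u2 v2 w2, \<psi> u3 v3 w3)])
                (List.product (Delta3 u) (List.product (Delta3 v) (Delta3 w))))))"

definition tsd_d1 :: "('k::field \<Rightarrow> 'g::ab_group_add \<Rightarrow> 'g) \<Rightarrow> ('g \<Rightarrow> 'g \<Rightarrow> 'g)
    \<Rightarrow> ('k \<times> 'g \<Rightarrow> 'k \<times> 'g) \<Rightarrow> 'k \<times> 'g \<Rightarrow> 'k \<times> 'g \<Rightarrow> 'k \<times> 'g \<Rightarrow> 'k \<times> 'g" where
  "tsd_d1 s br f x y z = f (T_op s br x y z) - T_op s br (f x) y z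
     - T_op s br x (f y) z - T_op s br x y (f z)"

definition Theta2 :: "('k::field \<Rightarrow> 'g::ab_group_add \<Rightarrow> 'g) \<Rightarrow> ('g \<Rightarrow> 'g \<Rightarrow> 'g) \<Rightarrow> ('g \<Rightarrow> 'g \<Rightarrow> 'g)
    \<Rightarrow> 'k \<times> 'g \<Rightarrow> 'k \<times> 'g \<Rightarrow> 'k \<times> 'g \<Rightarrow> 'k \<times> 'g" where
  "Theta2 s br \<phi> u v w =
     (let x = snd u; b = fst v; y = snd v; c = fst w; z = snd w in
      (0, s b (\<phi> x z) + s c (\<phi> x y) + br (\<phi> x y) z + \<phi> (br x y) z))"

end

theory Submission
  imports Defs
begin

text \<open>
  Suppose \<open>\<Theta>\<^sup>2(\<phi>) = \<delta>\<^sup>1 f\<close> and write \<open>f(0,x) = (\<alpha> x, g x)\<close>, \<open>f(1,0) = (c, z\<^sub>0)\<close>.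
  Evaluating both sides at \<open>(1,0) \<otimes> (0,y) \<otimes> (1,0)\<close> gives \<open>\<alpha> = 0\<close> and \<open>[z\<^sub>0, y] = 0\<close> for
  all \<open>y\<close>. Evaluating at \<open>(0,x) \<otimes> (0,y) \<otimes> (1,0)\<close>, where \<open>\<Theta>\<^sup>2(\<phi>)\<close> reduces to
  \<open>(0, \<phi>(x,y))\<close>, then yields \<open>\<phi> = \<delta>\<^sup>1 (g + c\<cdot>id)\<close> in the Lie complex.
\<close>

lemma
  assumes "lie_algebra s br"
  shows lie_algebra_module: "module s"
    and lie_bracket_add_left: "br (x + y) z = br x z + br y z"
    and lie_bracket_add_right: "br x (y + z) = br x y + br x z"
    and lie_bracket_scale_left: "br (s c x) y = s c (br x y)"
    and lie_bracket_scale_right: "br x (s c y) = s c (br x y)"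
    and lie_bracket_self: "br x x = 0"
  using assms by (simp_all add: lie_algebra_def module_iff_vector_space)

lemma lie_bracket_zero_left:
  assumes "lie_algebra s br" shows "br 0 y = 0"
  by (rule additive.zero) (simp add: additive_def lie_bracket_add_left[OF assms])

lemma lie_bracket_zero_right:
  assumes "lie_algebra s br" shows "br x 0 = 0"
  by (rule additive.zero) (simp add: additive_def lie_bracket_add_right[OF assms])

lemma lie_bracket_antisym:
  assumes "lie_algebra s br" shows "br x y = - br y x"
proof -
  have "0 = br (x + y) (x + y)" by (simp add: lie_bracket_self[OF assms])
  also have "\<dots> = br x x + br y x + (br x y + br y y)"
    by (simp only: lie_bracket_add_left[OF assms] lie_bracket_add_right[OF assms])
  also have "\<dots> = br x y + br y x" by (simp add: lie_bracket_self[OF assms])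
  finally show ?thesis by (metis eq_neg_iff_add_eq_0)
qed

lemma lie_d1_add_scale:
  assumes "lie_algebra s br"
  shows "lie_d1 br (\<lambda>x. g x + s c x) x y = lie_d1 br g x y - s c (br x y)"
  by (simp add: lie_d1_def lie_bracket_add_left[OF assms] lie_bracket_add_right[OF assms]
      lie_bracket_scale_left[OF assms] lie_bracket_scale_right[OF assms])

lemma lie_cochain2_zero_left:
  assumes "lie_cochain2 s \<phi>" shows "\<phi> 0 y = 0"
  using assms module_hom.zero[of s s "\<lambda>x. \<phi> x y"]
  by (simp add: lie_cochain2_def linear_iff_module_hom)

lemma lie_cochain2_zero_right:
  assumes "lie_cochain2 s \<phi>" shows "\<phi> x 0 = 0"
  using assms module_hom.zero[of s s "\<phi> x"]
  by (simp add: lie_cochain2_def linear_iff_module_hom)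

lemma linear_snd_Xhat:
  assumes "Vector_Spaces.linear (Xs s) (Xs s) f" and "vector_space s"
  shows "Vector_Spaces.linear s s (\<lambda>x. snd (f (Xhat x)))"
proof -
  have "snd (f (Xhat (x + y))) = snd (f (Xhat x)) + snd (f (Xhat y))" for x y
    using assms(1) module_hom.add[of "Xs s" "Xs s" f "Xhat x" "Xhat y"]
    by (simp add: linear_iff_module_hom Xhat_def)
  moreover have "snd (f (Xhat (s c x))) = s c (snd (f (Xhat x)))" for c x
    using assms(1) module_hom.scale[of "Xs s" "Xs s" f c "Xhat x"]
    by (simp add: linear_iff_module_hom Xhat_def Xs_def)
  ultimately show ?thesis
    using assms(2) by (simp add: Vector_Spaces.linear_iff)
qed

lemma T_op_Xunit_right:
  assumes "lie_algebra s br" shows "T_op s br u v Xunit = q_op s br u v"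
  using module.scale_one[OF lie_algebra_module[OF assms]] lie_bracket_zero_right[OF assms]
  by (simp add: T_op_def q_op_def Xunit_def)

lemma q_op_Xhat_right:
  assumes "lie_algebra s br" shows "q_op s br u (Xhat y) = Xhat (br (snd u) y)"
  using module.scale_zero_left[OF lie_algebra_module[OF assms]]
  by (simp add: q_op_def Xhat_def)

lemma q_op_Xunit_left:
  assumes "lie_algebra s br" shows "q_op s br Xunit u = (fst u, 0)"
  using module.scale_zero_right[OF lie_algebra_module[OF assms]]
    lie_bracket_zero_left[OF assms]
  by (simp add: q_op_def Xunit_def)

lemma Theta2_Xunit_right:
  assumes "lie_algebra s br" and "lie_cochain2 s \<phi>"
  shows "Theta2 s br \<phi> u v Xunit = Xhat (\<phi> (snd u) (snd v))"
  using lie_cochain2_zero_right[OF assms(2)] lie_bracket_zero_right[OF assms(1)]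
    module.scale_zero_left[OF lie_algebra_module[OF assms(1)]]
    module.scale_zero_right[OF lie_algebra_module[OF assms(1)]]
    module.scale_one[OF lie_algebra_module[OF assms(1)]]
  by (simp add: Theta2_def Xunit_def Xhat_def)

lemma tsd_d1_Xunit_Xhat_Xunit:
  assumes "lie_algebra s br" and "f 0 = 0"
  shows "tsd_d1 s br f Xunit (Xhat y) Xunit = - (fst (f (Xhat y)), br (snd (f Xunit)) y)"
  using assms module.scale_zero_right[OF lie_algebra_module[OF assms(1)]]
    module.scale_zero_left[OF lie_algebra_module[OF assms(1)]] lie_bracket_zero_left[OF assms(1)]
  by (simp add: tsd_d1_def T_op_Xunit_right q_op_Xhat_right q_op_Xunit_left)
    (simp add: T_op_def q_op_def Xhat_def Xunit_def zero_prod_def)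

lemma snd_tsd_d1_Xhat_Xhat_Xunit:
  assumes "lie_algebra s br"
  shows "snd (tsd_d1 s br f (Xhat x) (Xhat y) Xunit) =
    snd (f (Xhat (br x y))) - br (snd (f (Xhat x))) y
    - (s (fst (f (Xhat y))) x + br x (snd (f (Xhat y))))
    - (s (fst (f Xunit)) (br x y) + br (br x y) (snd (f Xunit)))"
  using assms module.scale_zero_left[OF lie_algebra_module[OF assms]]
  by (simp add: tsd_d1_def T_op_Xunit_right q_op_Xhat_right)
    (simp add: T_op_def q_op_def Xhat_def)

lemma lie_coboundary_of_Theta2_eq_tsd_d1:
  assumes lie: "lie_algebra s br" and cochain: "lie_cochain2 s \<phi>" and f0: "f 0 = 0"
    and coboundary: "Theta2 s br \<phi> = tsd_d1 s br f"
  shows "\<phi> = lie_d1 br (\<lambda>x. snd (f (Xhat x)) + s (fst (f Xunit)) x)"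
proof (intro ext)
  fix x y
  let ?g = "\<lambda>x. snd (f (Xhat x))" and ?c = "fst (f Xunit)" and ?z = "snd (f Xunit)"
  have "- (fst (f (Xhat w)), br ?z w) = 0" for w
  proof -
    have "- (fst (f (Xhat w)), br ?z w) = tsd_d1 s br f Xunit (Xhat w) Xunit"
      by (rule tsd_d1_Xunit_Xhat_Xunit[of s br f, OF lie f0, symmetric])
    also have "\<dots> = Theta2 s br \<phi> Xunit (Xhat w) Xunit"
      by (simp add: coboundary)
    also have "\<dots> = 0"
      unfolding Theta2_Xunit_right[OF lie cochain]
      by (simp add: lie_cochain2_zero_left[OF cochain] Xunit_def Xhat_def zero_prod_def)
    finally show ?thesis .
  qed
  then have fst_hat: "fst (f (Xhat w)) = 0" and central: "br ?z w = 0" for w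
    by (simp_all add: zero_prod_def)
  have "\<phi> x y = snd (Theta2 s br \<phi> (Xhat x) (Xhat y) Xunit)"
    by (simp add: Theta2_Xunit_right[OF lie cochain] Xhat_def)
  also have "\<dots> = lie_d1 br ?g x y - s ?c (br x y)"
    using coboundary snd_tsd_d1_Xhat_Xhat_Xunit[OF lie, of f x y] fst_hat central
      module.scale_zero_left[OF lie_algebra_module[OF lie]] lie_bracket_antisym[OF lie, of _ ?z]
    by (simp add: lie_d1_def)
  also have "\<dots> = lie_d1 br (\<lambda>x. ?g x + s ?c x) x y"
    by (simp add: lie_d1_add_scale[OF lie])
  finally show "\<phi> x y = lie_d1 br (\<lambda>x. ?g x + s ?c x) x y" .
qed

theorem mainTheorem8:
  fixes s :: "'k::field \<Rightarrow> 'g::ab_group_add \<Rightarrow> 'g"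
    and br :: "'g \<Rightarrow> 'g \<Rightarrow> 'g"
    and \<phi> :: "'g \<Rightarrow> 'g \<Rightarrow> 'g"
  assumes "lie_algebra s br"
    and "lie_cochain2 s \<phi>"
    and "\<forall>x y z. lie_d2 br \<phi> x y z = 0"
    and "\<exists>f. C1_TSD s f \<and> Theta2 s br \<phi> = tsd_d1 s br f"
  shows "\<exists>f. Vector_Spaces.linear s s f \<and> \<phi> = lie_d1 br f"
proof -
  obtain f where "C1_TSD s f" and coboundary: "Theta2 s br \<phi> = tsd_d1 s br f"
    using assms(4) by blast
  then have f_linear: "Vector_Spaces.linear (Xs s) (Xs s) f"
    by (simp add: C1_TSD_def)
  have vs: "vector_space s"
    using lie_algebra_module[OF assms(1)] by (simp add: module_iff_vector_space)
  let ?F = "\<lambda>x. snd (f (Xhat x)) + s (fst (f Xunit)) x"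
  have "Vector_Spaces.linear s s ?F"
    using vs by (intro vector_space_pair.linear_compose_add linear_snd_Xhat[OF f_linear]
        vector_space.linear_scale_self) (simp_all add: vector_space_pair_def)
  moreover have "\<phi> = lie_d1 br ?F"
    using f_linear module_hom.zero[of "Xs s" "Xs s" f]
    by (intro lie_coboundary_of_Theta2_eq_tsd_d1[OF assms(1,2) _ coboundary])
      (simp add: linear_iff_module_hom)
  ultimately show ?thesis by blast
qed

end
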